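(* Let $N\ge 847$ be an integer, and let $M$ be the set of pairs produced by the born-free matching algorithm with $p_{\max}=5$ for $N$. Then $\sum_{(x,y)\in M} y > \frac{1}{2}\cdot\frac{N(N+1)}{2}$, i.e., the sum of the larger elements of the pairs of $M$ exceeds half of $1+2+\dots+N$.
   Context: For a prime $p$ and a positive integer $N$, let $S_p=\{(x,px): x\in\mathbb{N},\ px\le N\}$. The born-free matching algorithm with $p_{\max}=5$ for $N$: start with $M=\emptyset$; run through the primes $5,3,2$ in this order (only those $\le N$); for each such $p$, run through the pairs $(x,px)\in S_p$ in descending order of $x$, and add $(x,px)$ to $M$ whenever neither $x$ nor $px$ is an endpoint of a pair already in $M$. *)

theory Defs
  imports Main
begin

definition endpoints :: "(nat \<times> nat) set \<Rightarrow> nat set" where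
  "endpoints M = fst ` M \<union> snd ` M"

definition add_pair :: "(nat \<times> nat) set \<Rightarrow> nat \<times> nat \<Rightarrow> (nat \<times> nat) set" where
  "add_pair M xy = (if fst xy \<notin> endpoints M \<and> snd xy \<notin> endpoints M
                    then insert xy M else M)"

definition pairs_desc :: "nat \<Rightarrow> nat \<Rightarrow> (nat \<times> nat) list" where
  "pairs_desc N p = map (\<lambda>x. (x, p * x)) (rev [1..<N div p + 1])"

definition primes_order :: "nat \<Rightarrow> nat list" where
  "primes_order N = filter (\<lambda>p. p \<le> N) [5, 3, 2]"

definition born_free_matching :: "nat \<Rightarrow> (nat \<times> nat) set" where
  "born_free_matching N =
     foldl add_pair {} (concat (map (pairs_desc N) (primes_order N)))"

end

theory Submission
  imports Defs Complex_Main
begin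

text \<open>
  During the pass for the prime \<open>p\<close> (descending \<open>x\<close>), the pair \<open>(x, p x)\<close> is accepted
  whenever \<open>p\<^sup>2 x > N\<close> and neither \<open>x\<close> nor \<open>p x\<close> was used by an earlier prime \<open>q\<close>: the first
  condition keeps every earlier pair \<open>(a, p a)\<close> of the same pass away from \<open>x\<close> and \<open>p x\<close>, and
  the second holds whenever \<open>x > N / q\<close> and \<open>\<not> q dvd x\<close>. So the matching contains \<open>(x, 5x)\<close> for
  \<open>N/25 < x \<le> N/5\<close>, \<open>(x, 3x)\<close> for \<open>N/5 < x \<le> N/3\<close> with \<open>\<not> 5 dvd x\<close>, and \<open>(x, 2x)\<close> for
  \<open>N/3 < x \<le> N/2\<close> with \<open>gcd x 15 = 1\<close>. By inclusion-exclusion the weight of these pairs is an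
  integer combination of the triangular numbers \<open>\<Sum>{..N div k} = N\<^sup>2/(2k\<^sup>2) + O(N/k)\<close>; four times
  it is about \<open>1.0216 N\<^sup>2\<close>, and \<open>N \<ge> 847\<close> makes the linear error terms negligible.
\<close>

lemma endpoints_mono: "A \<subseteq> B \<Longrightarrow> endpoints A \<subseteq> endpoints B"
  by (auto simp: endpoints_def)

lemma endpoints_Un: "endpoints (A \<union> B) = endpoints A \<union> endpoints B"
  by (auto simp: endpoints_def)

lemma subset_foldl_add_pair: "M \<subseteq> foldl add_pair M xs"
proof (induction xs arbitrary: M)
  case (Cons q xs)
  have "M \<subseteq> add_pair M q" by (auto simp: add_pair_def)
  then show ?case using Cons.IH[of "add_pair M q"] by simp
qed simp

lemma foldl_add_pair_subset: "foldl add_pair M xs \<subseteq> M \<union> set xs"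
proof (induction xs arbitrary: M)
  case (Cons q xs)
  have "add_pair M q \<subseteq> M \<union> {q}" by (auto simp: add_pair_def)
  then show ?case using Cons.IH[of "add_pair M q"] by auto
qed simp

lemma endpoints_foldl_add_pair:
  "endpoints (foldl add_pair M xs) \<subseteq> endpoints M \<union> endpoints (set xs)"
  using endpoints_mono[OF foldl_add_pair_subset] by (simp add: endpoints_Un)

lemma endpoints_graph: "endpoints ((\<lambda>a. (a, f a)) ` A) = A \<union> f ` A"
  by (auto simp: endpoints_def image_image)

lemma mem_foldl_add_pair:
  assumes "endpoints {q} \<inter> endpoints (M \<union> set ys) = {}"
  shows "q \<in> foldl add_pair M (ys @ q # zs)"
proof -
  define M' where "M' = foldl add_pair M ys"
  have "endpoints M' \<subseteq> endpoints (M \<union> set ys)"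
    unfolding M'_def using endpoints_foldl_add_pair by (simp add: endpoints_Un)
  then have "q \<in> add_pair M' q"
    using assms by (auto simp: add_pair_def endpoints_def)
  then show ?thesis
    using subset_foldl_add_pair[of "add_pair M' q" zs] by (auto simp: M'_def)
qed

lemma mem_set_pairs_desc:
  "(a, b) \<in> set (pairs_desc N p) \<longleftrightarrow> 1 \<le> a \<and> a \<le> N div p \<and> b = p * a"
  by (auto simp: pairs_desc_def)

lemma pairs_desc_split:
  assumes "1 \<le> x" "x \<le> N div p"
  obtains ys zs where "pairs_desc N p = ys @ (x, p * x) # zs"
    and "set ys = (\<lambda>a. (a, p * a)) ` {x<..N div p}"
proof
  have "[1..<N div p + 1] = [1..<x] @ [x..<N div p + 1]"
    using upt_add_eq_append[of 1 x "N div p + 1 - x"] assms by simp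
  also have "[x..<N div p + 1] = x # [Suc x..<N div p + 1]"
    using assms by (simp add: upt_conv_Cons)
  finally show "pairs_desc N p = map (\<lambda>a. (a, p * a)) (rev [Suc x..<N div p + 1])
      @ (x, p * x) # map (\<lambda>a. (a, p * a)) (rev [1..<x])"
    by (simp add: pairs_desc_def)
  show "set (map (\<lambda>a. (a, p * a)) (rev [Suc x..<N div p + 1])) = (\<lambda>a. (a, p * a)) ` {x<..N div p}"
    by (simp only: set_map set_rev set_upt atLeastSucLessThan_greaterThanLessThan)
      (simp add: greaterThanLessThan_def greaterThanAtMost_def lessThan_def atMost_def less_Suc_eq_le)
qed

lemma not_mem_endpoints_pairs_desc:
  assumes "N < q * v" "\<not> q dvd v"
  shows "v \<notin> endpoints (set (pairs_desc N q))"
proof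
  assume "v \<in> endpoints (set (pairs_desc N q))"
  then obtain a where "a \<le> N div q" "v = a \<or> v = q * a"
    by (auto simp: endpoints_def mem_set_pairs_desc)
  moreover have "0 < q" using assms(1) by (cases q) auto
  ultimately have "q * a \<le> N" "v = a \<or> v = q * a"
    by (auto simp: less_eq_div_iff_mult_less_eq mult.commute)
  then show False using assms by auto
qed

lemma mem_foldl_pairs_desc:
  assumes "0 < p" "1 \<le> x" "p * x \<le> N" "N < p * (p * x)"
    and "x \<notin> endpoints M" "p * x \<notin> endpoints M"
  shows "(x, p * x) \<in> foldl add_pair M (pairs_desc N p)"
proof -
  have "x \<le> N div p"
    using assms by (simp add: less_eq_div_iff_mult_less_eq mult.commute)
  then obtain ys zs where split: "pairs_desc N p = ys @ (x, p * x) # zs"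
    and ys: "set ys = (\<lambda>a. (a, p * a)) ` {x<..N div p}"
    using pairs_desc_split assms(2) by blast
  have disjoint: "a \<noteq> x \<and> a \<noteq> p * x \<and> p * a \<noteq> x \<and> p * a \<noteq> p * x"
    if "a \<in> {x<..N div p}" for a
  proof -
    have "p * a \<le> N"
      using that assms(1) by (simp add: less_eq_div_iff_mult_less_eq mult.commute)
    then have "a < p * x"
      using assms(4) by (metis le_less_trans mult_less_cancel1)
    moreover have "a \<le> p * a"
      using assms(1) by simp
    ultimately show ?thesis
      using that assms(1) by auto
  qed
  have "v \<notin> endpoints (set ys)" if "v \<in> {x, p * x}" for v
  proof
    assume "v \<in> endpoints (set ys)"
    then obtain a where "a \<in> {x<..N div p}" "v = a \<or> v = p * a"
      unfolding ys endpoints_graph by blast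
    then show False
      using disjoint[OF \<open>a \<in> _\<close>] that by auto
  qed
  then have "endpoints {(x, p * x)} \<inter> endpoints (M \<union> set ys) = {}"
    using assms(5,6) by (auto simp: endpoints_Un endpoints_def)
  then show ?thesis
    unfolding split by (rule mem_foldl_add_pair)
qed

lemma born_free_matching_phases:
  assumes "5 \<le> N"
  shows "born_free_matching N = foldl add_pair
           (foldl add_pair (foldl add_pair {} (pairs_desc N 5)) (pairs_desc N 3)) (pairs_desc N 2)"
  using assms by (simp add: born_free_matching_def primes_order_def)

lemma finite_born_free_matching: "finite (born_free_matching N)"
proof (rule finite_subset)
  show "born_free_matching N \<subseteq> {} \<union> set (concat (map (pairs_desc N) (primes_order N)))"
    unfolding born_free_matching_def by (rule foldl_add_pair_subset)
qed simp

lemma mem_born_free_matching: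
  assumes "5 \<le> N"
  shows "N < 25 * x \<Longrightarrow> 5 * x \<le> N \<Longrightarrow> (x, 5 * x) \<in> born_free_matching N"
    and "N < 5 * x \<Longrightarrow> 3 * x \<le> N \<Longrightarrow> \<not> 5 dvd x \<Longrightarrow> (x, 3 * x) \<in> born_free_matching N"
    and "N < 3 * x \<Longrightarrow> 2 * x \<le> N \<Longrightarrow> \<not> 5 dvd x \<Longrightarrow> \<not> 3 dvd x
        \<Longrightarrow> (x, 2 * x) \<in> born_free_matching N"
proof -
  define M5 where "M5 = foldl add_pair {} (pairs_desc N 5)"
  define M3 where "M3 = foldl add_pair M5 (pairs_desc N 3)"
  have M: "born_free_matching N = foldl add_pair M3 (pairs_desc N 2)"
    using born_free_matching_phases[OF assms] by (simp add: M3_def M5_def)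
  have M5_M3: "M5 \<subseteq> M3" and M3_M: "M3 \<subseteq> born_free_matching N"
    unfolding M M3_def by (rule subset_foldl_add_pair)+
  have E5: "endpoints M5 \<subseteq> endpoints (set (pairs_desc N 5))"
    using endpoints_foldl_add_pair[of "{}"] by (simp add: M5_def endpoints_def)
  have E3: "endpoints M3 \<subseteq> endpoints (set (pairs_desc N 5)) \<union> endpoints (set (pairs_desc N 3))"
    using endpoints_foldl_add_pair[of M5] E5 unfolding M3_def by blast
  show "(x, 5 * x) \<in> born_free_matching N" if "N < 25 * x" "5 * x \<le> N"
  proof -
    have "(x, 5 * x) \<in> M5"
      unfolding M5_def using that assms by (intro mem_foldl_pairs_desc) (auto simp: endpoints_def)
    then show ?thesis using M5_M3 M3_M by blast
  qed
  show "(x, 3 * x) \<in> born_free_matching N" if "N < 5 * x" "3 * x \<le> N" "\<not> 5 dvd x"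
  proof -
    have "\<not> 5 dvd 3 * x"
      using that(3) by presburger
    then have "x \<notin> endpoints M5" "3 * x \<notin> endpoints M5"
      using that E5 not_mem_endpoints_pairs_desc[of N 5] by auto
    then have "(x, 3 * x) \<in> M3"
      unfolding M3_def using that assms by (intro mem_foldl_pairs_desc) auto
    then show ?thesis using M3_M by blast
  qed
  show "(x, 2 * x) \<in> born_free_matching N"
    if "N < 3 * x" "2 * x \<le> N" "\<not> 5 dvd x" "\<not> 3 dvd x"
  proof -
    have "\<not> 5 dvd 2 * x" "\<not> 3 dvd 2 * x"
      using that(3,4) by presburger+
    then have "x \<notin> endpoints M3" "2 * x \<notin> endpoints M3"
      using that E3 not_mem_endpoints_pairs_desc[of N 5] not_mem_endpoints_pairs_desc[of N 3] by auto
    then show ?thesis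
      unfolding M using that assms by (intro mem_foldl_pairs_desc) auto
  qed
qed

lemma sum_snd_graph:
  fixes c :: nat
  shows "(\<Sum>(x, y) \<in> (\<lambda>x. (x, c * x)) ` A. y) = c * \<Sum>A"
proof -
  have "inj_on (\<lambda>x. (x, c * x)) A"
    by (auto simp: inj_on_def)
  then show ?thesis
    by (simp add: sum.reindex sum_distrib_left)
qed

lemma sum_multiples_atMost:
  fixes d n :: nat
  assumes "0 < d"
  shows "\<Sum>{x \<in> {..n}. d dvd x} = d * \<Sum>{..n div d}"
proof -
  have "k \<le> n div d \<longleftrightarrow> d * k \<le> n" for k
    using assms by (metis less_eq_div_iff_mult_less_eq mult.commute)
  then have "{x \<in> {..n}. d dvd x} = (\<lambda>k. d * k) ` {..n div d}"
    by (auto elim!: dvdE)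
  moreover have "inj_on (\<lambda>k. d * k) {..n div d}"
    using assms by (auto simp: inj_on_def)
  ultimately show ?thesis
    by (simp add: sum.reindex sum_distrib_left)
qed

lemma sum_filter_atMost_eq_if:
  fixes n :: nat
  shows "\<Sum>{x \<in> {..n}. P x} = (\<Sum>x\<le>n. if P x then x else 0)"
  by (rule sum.inter_filter) (rule finite_atMost)

lemma sum_atMost_not_dvd:
  fixes d n :: nat
  assumes "0 < d"
  shows "\<Sum>{x \<in> {..n}. \<not> d dvd x} + d * \<Sum>{..n div d} = \<Sum>{..n}"
proof -
  have "\<Sum>{x \<in> {..n}. \<not> d dvd x} + \<Sum>{x \<in> {..n}. d dvd x} = \<Sum>{..n}"
    unfolding sum_filter_atMost_eq_if sum.distrib[symmetric] by (rule sum.cong) auto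
  then show ?thesis
    using sum_multiples_atMost[OF assms] by simp
qed

lemma sum_atMost_not_dvd_coprime:
  fixes d e n :: nat
  assumes "coprime d e" "0 < d" "0 < e"
  shows "\<Sum>{x \<in> {..n}. \<not> d dvd x \<and> \<not> e dvd x} + d * \<Sum>{..n div d} + e * \<Sum>{..n div e}
    = \<Sum>{..n} + d * e * \<Sum>{..n div (d * e)}"
proof -
  have "d dvd x \<and> e dvd x \<longleftrightarrow> d * e dvd x" for x
    using divides_mult[OF _ _ assms(1)] by (auto intro: dvd_mult_left dvd_mult_right)
  then have "\<Sum>{x \<in> {..n}. \<not> d dvd x \<and> \<not> e dvd x} + \<Sum>{x \<in> {..n}. d dvd x}
      + \<Sum>{x \<in> {..n}. e dvd x} = \<Sum>{..n} + \<Sum>{x \<in> {..n}. d * e dvd x}"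
    unfolding sum_filter_atMost_eq_if sum.distrib[symmetric] by (intro sum.cong) auto
  then show ?thesis
    using assms(2,3) by (simp only: sum_multiples_atMost mult_pos_pos)
qed

lemma sum_filter_greaterThanAtMost:
  fixes a b :: nat
  assumes "a \<le> b"
  shows "\<Sum>{x \<in> {a<..b}. P x} + \<Sum>{x \<in> {..a}. P x} = \<Sum>{x \<in> {..b}. P x}"
proof -
  have "{x \<in> {..b}. P x} = {x \<in> {a<..b}. P x} \<union> {x \<in> {..a}. P x}"
    using assms by auto
  also have "\<Sum>\<dots> = \<Sum>{x \<in> {a<..b}. P x} + \<Sum>{x \<in> {..a}. P x}"
    by (rule sum.union_disjoint) auto
  finally show ?thesis ..
qed

lemma mult_succ_bounds:
  fixes a y :: real
  assumes "0 \<le> a" "a \<le> y" "y < a + 1"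
  shows "y\<^sup>2 - y \<le> a * (a + 1)" "a * (a + 1) \<le> y\<^sup>2 + y"
proof -
  have "a * a \<le> y * y"
    using assms by (intro mult_mono) auto
  then show "a * (a + 1) \<le> y\<^sup>2 + y"
    using assms by (simp add: power2_eq_square algebra_simps)
  show "y\<^sup>2 - y \<le> a * (a + 1)"
  proof (cases "y \<le> 1")
    case True
    then have "y * y \<le> y"
      using assms by (simp add: mult_left_le)
    moreover have "0 \<le> a * (a + 1)"
      using assms by simp
    ultimately show ?thesis
      by (simp add: power2_eq_square)
  next
    case False
    then have "(y - 1) * y \<le> a * (a + 1)"
      using assms by (intro mult_mono) auto
    then show ?thesis by (simp add: power2_eq_square algebra_simps)
  qed
qed

lemma sum_atMost_div_bounds:
  fixes N k :: nat
  assumes "0 < k"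
  shows "real N * real N \<le> real k * real N + 2 * (real k * real k) * real (\<Sum>{..N div k})"
    and "2 * (real k * real k) * real (\<Sum>{..N div k}) \<le> real N * real N + real k * real N"
proof -
  define y where "y = real N / real k"
  have N: "real N = real k * y"
    using assms by (simp add: y_def)
  have gauss: "2 * real (\<Sum>{..N div k}) = real (N div k) * (real (N div k) + 1)"
    using double_gauss_sum[of "N div k", where 'a = real] by (simp add: atLeast0AtMost)
  have "real (N div k) \<le> y" "y < real (N div k) + 1"
    using floor_correct[of y] by (simp_all add: y_def floor_divide_of_nat_eq)
  then have "y\<^sup>2 - y \<le> 2 * real (\<Sum>{..N div k})" "2 * real (\<Sum>{..N div k}) \<le> y\<^sup>2 + y"
    unfolding gauss by (simp_all add: mult_succ_bounds)
  then have "real k * real k * (y\<^sup>2 - y) \<le> real k * real k * (2 * real (\<Sum>{..N div k}))"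
    and "real k * real k * (2 * real (\<Sum>{..N div k})) \<le> real k * real k * (y\<^sup>2 + y)"
    by (simp_all add: mult_left_mono)
  then show "real N * real N \<le> real k * real N + 2 * (real k * real k) * real (\<Sum>{..N div k})"
    and "2 * (real k * real k) * real (\<Sum>{..N div k}) \<le> real N * real N + real k * real N"
    unfolding N by (simp_all add: power2_eq_square algebra_simps)
qed

lemma weighted_phase_sums_gt:
  fixes N :: nat
  assumes "847 \<le> N"
  shows "N * (N + 1) < 4 * (5 * \<Sum>{N div 25<..N div 5}
    + 3 * \<Sum>{x \<in> {N div 5<..N div 3}. \<not> 5 dvd x}
    + 2 * \<Sum>{x \<in> {N div 3<..N div 2}. \<not> 3 dvd x \<and> \<not> 5 dvd x})"
proof -
  define T where "T k = \<Sum>{..N div k}" for k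
  define F where "F m = \<Sum>{x \<in> {..m}. \<not> 5 dvd x}" for m :: nat
  define G where "G m = \<Sum>{x \<in> {..m}. \<not> 3 dvd x \<and> \<not> 5 dvd x}" for m :: nat
  define S5 where "S5 = \<Sum>{N div 25<..N div 5}"
  define S3 where "S3 = \<Sum>{x \<in> {N div 5<..N div 3}. \<not> 5 dvd x}"
  define S2 where "S2 = \<Sum>{x \<in> {N div 3<..N div 2}. \<not> 3 dvd x \<and> \<not> 5 dvd x}"
  have div_div: "N div m div d = N div (m * d)" for m d :: nat
    by (simp add: div_mult2_eq)
  have coprime_3_5: "coprime (3::nat) 5"
    by (simp add: coprime_iff_gcd_eq_1 gcd_non_0_nat)
  have e5: "S5 + T 25 = T 5"
    using sum_filter_greaterThanAtMost[of "N div 25" "N div 5" "\<lambda>_. True"]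
    unfolding S5_def T_def by (simp only: simp_thms Collect_mem_eq div_le_mono2)
  have e3: "S3 + F (N div 5) = F (N div 3)"
    unfolding S3_def F_def by (rule sum_filter_greaterThanAtMost) (simp add: div_le_mono2)
  have e2: "S2 + G (N div 3) = G (N div 2)"
    unfolding S2_def G_def by (rule sum_filter_greaterThanAtMost) (simp add: div_le_mono2)
  have f: "F (N div m) + 5 * T (m * 5) = T m" for m
    using sum_atMost_not_dvd[of 5 "N div m"] by (simp add: F_def T_def div_div)
  have g: "G (N div m) + 3 * T (m * 3) + 5 * T (m * 5) = T m + 15 * T (m * 15)" for m
    using sum_atMost_not_dvd_coprime[OF coprime_3_5, of "N div m"] by (simp add: G_def T_def div_div mult.assoc)
  note lower = sum_atMost_div_bounds(1)[of _ N, folded T_def]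
  note upper = sum_atMost_div_bounds(2)[of _ N, folded T_def]
  have "847 \<le> real N" "847 * real N \<le> real N * real N"
    using assms by simp_all
  moreover note
    e5 e3 e2 f[of 5] f[of 3] g[of 2] g[of 3]
  moreover note \<comment> \<open>\<open>T k\<close> enters the weight with positive coefficient for \<open>k = 2, 3, 5, 9, 25, 30\<close>\<close>
    lower[of 2] lower[of 3] lower[of 5] lower[of 9] lower[of 25] lower[of 30]
    upper[of 6] upper[of 10] upper[of 15] upper[of 45]
  ultimately have "real N * real N + real N < 4 * (5 * real S5 + 3 * real S3 + 2 * real S2)"
    by (simp flip: of_nat_add of_nat_mult)
  then have "real (N * (N + 1)) < real (4 * (5 * S5 + 3 * S3 + 2 * S2))"
    by (simp add: algebra_simps)
  then show ?thesis
    unfolding S5_def S3_def S2_def of_nat_less_iff .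
qed

lemma sum_snd_born_free_matching_ge:
  assumes "5 \<le> N"
  shows "5 * \<Sum>{N div 25<..N div 5}
    + 3 * \<Sum>{x \<in> {N div 5<..N div 3}. \<not> 5 dvd x}
    + 2 * \<Sum>{x \<in> {N div 3<..N div 2}. \<not> 3 dvd x \<and> \<not> 5 dvd x}
    \<le> (\<Sum>(x, y)\<in>born_free_matching N. y)"
proof -
  define A5 where "A5 = {N div 25<..N div 5}"
  define A3 where "A3 = {x \<in> {N div 5<..N div 3}. \<not> 5 dvd x}"
  define A2 where "A2 = {x \<in> {N div 3<..N div 2}. \<not> 3 dvd x \<and> \<not> 5 dvd x}"
  define graph :: "nat \<Rightarrow> nat set \<Rightarrow> (nat \<times> nat) set"
    where "graph c A = (\<lambda>x. (x, c * x)) ` A" for c A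
  have interval: "x \<in> {N div a<..N div b} \<longleftrightarrow> N < a * x \<and> b * x \<le> N"
    if "0 < a" "0 < b" for a b x
    using that by (simp add: div_less_iff_less_mult less_eq_div_iff_mult_less_eq mult.commute)
  have "graph 5 A5 \<union> graph 3 A3 \<union> graph 2 A2 \<subseteq> born_free_matching N"
    using mem_born_free_matching[OF assms] by (auto simp: graph_def A5_def A3_def A2_def interval)
  moreover have "finite (graph 5 A5)" "finite (graph 3 A3)" "finite (graph 2 A2)"
    by (simp_all add: graph_def A5_def A3_def A2_def)
  moreover have "graph 5 A5 \<inter> graph 3 A3 = {}" "(graph 5 A5 \<union> graph 3 A3) \<inter> graph 2 A2 = {}"
    by (auto simp: graph_def A5_def A3_def A2_def)
  ultimately have "(\<Sum>(x, y)\<in>graph 5 A5. y) + (\<Sum>(x, y)\<in>graph 3 A3. y) + (\<Sum>(x, y)\<in>graph 2 A2. y)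
      \<le> (\<Sum>(x, y)\<in>born_free_matching N. y)"
    using finite_born_free_matching by (metis (no_types) sum.union_disjoint finite_UnI sum_mono2 zero_le)
  then show ?thesis
    by (simp add: graph_def sum_snd_graph A5_def A3_def A2_def)
qed

theorem theorem4:
  fixes N :: nat
  assumes "N \<ge> 847"
  shows "4 * (\<Sum>(x, y)\<in>born_free_matching N. y) > N * (N + 1)"
proof -
  have "5 \<le> N"
    using assms by simp
  from sum_snd_born_free_matching_ge[OF this] show ?thesis
    using weighted_phase_sums_gt[OF assms] by (meson less_le_trans mult_le_mono2)
qed

end
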